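(* Let $\mathcal{T}=(\mathbb{K}_i,\phi_i)_{i=0,\dots,m}$ be a tower with $\mathbb{K}_0=\emptyset$ whose maps are elementary inclusions or elementary contractions, named according to the naming convention below, and let $\hat{\mathbb{K}}_0,\dots,\hat{\mathbb{K}}_m$ be the active small coning construction. For every $0\le i\le m$, $\mathbb{K}_i\subseteq\hat{\mathbb{K}}_i$ and the complex $\hat{\mathbb{K}}_i$ collapses to $\mathbb{K}_i$.
   Context: A free face of a complex is a simplex with exactly one proper coface; an elementary collapse removes a free face and its unique proper coface; $\mathbb{K}$ collapses to $\mathbb{L}$ if a sequence of elementary collapses transforms $\mathbb{K}$ into $\mathbb{L}$. Elementary inclusion: $\mathbb{K}_{i+1}=\mathbb{K}_i\cup\{\sigma\}$, $\sigma\notin\mathbb{K}_i$. Elementary contraction of distinct vertices $u,v$: for one of them, say $v$, the vertex set of $\mathbb{K}_{i+1}$ is that of $\mathbb{K}_i$ minus $v$, $\phi_i(u)=\phi_i(v)=u$, identity elsewhere, $\mathbb{K}_{i+1}=\phi_i(\mathbb{K}_i)$. Active small coning construction: $\hat{\mathbb{K}}_0=\emptyset$; vertices flagged active/inactive, simplex active iff all its vertices are; $\mathrm{Act}\overline{\mathrm{St}}(w,\hat{\mathbb{K}}_i)$ = active simplices of $\hat{\mathbb{K}}_i$ in the closed star of $w$. Inclusion of $\sigma$: add $\sigma$, new vertex active. Contraction of $u,v$: if $|\mathrm{Act}\overline{\mathrm{St}}(u,\hat{\mathbb{K}}_i)|\le|\mathrm{Act}\overline{\mathrm{St}}(v,\hat{\mathbb{K}}_i)|$,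 $\hat{\mathbb{K}}_{i+1}=\hat{\mathbb{K}}_i\cup\{\{v\}\cup\tau:\tau\in\mathrm{Act}\overline{\mathrm{St}}(u,\hat{\mathbb{K}}_i)\}$ and $u$ is marked inactive; otherwise the same with $u,v$ exchanged. Naming convention: each contraction maps $u,v$ to the vertex not marked inactive. *)

theory Defs
  imports Main
begin

definition simplicial_complex :: "'v set set \<Rightarrow> bool" where
  "simplicial_complex K \<longleftrightarrow> finite K \<and>
     (\<forall>\<sigma>\<in>K. finite \<sigma> \<and> \<sigma> \<noteq> {} \<and> (\<forall>\<tau>. \<tau> \<subseteq> \<sigma> \<and> \<tau> \<noteq> {} \<longrightarrow> \<tau> \<in> K))"

definition vertices :: "'v set set \<Rightarrow> 'v set" where
  "vertices K = \<Union>K"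

definition free_face :: "'v set \<Rightarrow> 'v set set \<Rightarrow> bool" where
  "free_face \<tau> K \<longleftrightarrow> \<tau> \<in> K \<and> (\<exists>!\<sigma>. \<sigma> \<in> K \<and> \<tau> \<subset> \<sigma>)"

definition elementary_collapse :: "'v set set \<Rightarrow> 'v set set \<Rightarrow> bool" where
  "elementary_collapse K K' \<longleftrightarrow>
     (\<exists>\<tau> \<sigma>. free_face \<tau> K \<and> \<sigma> \<in> K \<and> \<tau> \<subset> \<sigma> \<and> K' = K - {\<tau>, \<sigma>})"

definition collapses :: "'v set set \<Rightarrow> 'v set set \<Rightarrow> bool" where
  "collapses K L \<longleftrightarrow> elementary_collapse\<^sup>*\<^sup>* K L"

definition contract :: "'v set set \<Rightarrow> 'v \<Rightarrow> 'v \<Rightarrow> 'v set set" where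
  "contract K r w = (\<lambda>\<sigma>. (\<lambda>x. if x = r then w else x) ` \<sigma>) ` K"

text \<open>Steps of a tower: inclusion of a simplex, or contraction of two (unordered) vertices.\<close>
datatype 'v step = Incl "'v set" | Contr 'v 'v

definition closed_star :: "'v \<Rightarrow> 'v set set \<Rightarrow> 'v set set" where
  "closed_star w K = {\<tau> \<in> K. \<exists>\<sigma>\<in>K. w \<in> \<sigma> \<and> \<tau> \<subseteq> \<sigma>}"

definition act_closed_star :: "'v \<Rightarrow> 'v set set \<Rightarrow> 'v set \<Rightarrow> 'v set set" where
  "act_closed_star w K A = {\<tau> \<in> closed_star w K. \<tau> \<subseteq> A}"

definition coning_removed :: "'v set set \<Rightarrow> 'v set \<Rightarrow> 'v \<Rightarrow> 'v \<Rightarrow> 'v" where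
  "coning_removed H A u v =
     (if card (act_closed_star u H A) \<le> card (act_closed_star v H A) then u else v)"

definition coning_survivor :: "'v set set \<Rightarrow> 'v set \<Rightarrow> 'v \<Rightarrow> 'v \<Rightarrow> 'v" where
  "coning_survivor H A u v =
     (if card (act_closed_star u H A) \<le> card (act_closed_star v H A) then v else u)"

definition cone_step :: "'v set set \<Rightarrow> 'v set \<Rightarrow> 'v \<Rightarrow> 'v \<Rightarrow> 'v set set" where
  "cone_step H A r w = H \<union> (insert w) ` act_closed_star r H A"

fun small_coning :: "(nat \<Rightarrow> 'v step) \<Rightarrow> nat \<Rightarrow> 'v set set \<times> 'v set" where
  "small_coning s 0 = ({}, {})"
| "small_coning s (Suc i) =
     (case small_coning s i of (H, A) \<Rightarrow>
       (case s i of
          Incl \<sigma> \<Rightarrow> (insert \<sigma> H, if card \<sigma> = 1 then A \<union> \<sigma> else A)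
        | Contr u v \<Rightarrow>
            (cone_step H A (coning_removed H A u v) (coning_survivor H A u v),
             A - {coning_removed H A u v})))"

definition hatK :: "(nat \<Rightarrow> 'v step) \<Rightarrow> nat \<Rightarrow> 'v set set" where
  "hatK s i = fst (small_coning s i)"

definition active :: "(nat \<Rightarrow> 'v step) \<Rightarrow> nat \<Rightarrow> 'v set" where
  "active s i = snd (small_coning s i)"

text \<open>The tower (K_i) with steps s is a tower of elementary inclusions / contractions
  starting at the empty complex, named by the convention (contraction maps onto the
  vertex not marked inactive). New vertices introduced by inclusions are fresh.\<close>
definition coning_tower :: "(nat \<Rightarrow> 'v set set) \<Rightarrow> (nat \<Rightarrow> 'v step) \<Rightarrow> nat \<Rightarrow> bool" where
  "coning_tower K s m \<longleftrightarrow>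
     K 0 = {} \<and>
     (\<forall>i\<le>m. simplicial_complex (K i)) \<and>
     (\<forall>i<m. case s i of
        Incl \<sigma> \<Rightarrow> \<sigma> \<notin> K i \<and> K (Suc i) = insert \<sigma> (K i) \<and>
                   (\<forall>j\<le>i. \<sigma> \<inter> vertices (K j) = {} \<or> card \<sigma> \<noteq> 1)
      | Contr u v \<Rightarrow> u \<noteq> v \<and> u \<in> vertices (K i) \<and> v \<in> vertices (K i) \<and>
          K (Suc i) = contract (K i)
              (coning_removed (hatK s i) (active s i) u v)
              (coning_survivor (hatK s i) (active s i) u v))"

end

theory Submission
  imports Defs
begin

text \<open>
  Along the tower one maintains that \<open>K i\<close> is exactly the part of \<open>hatK s i\<close> spanned by the
  active vertices, that \<open>hatK s i\<close> is closed under faces, and that it collapses onto \<open>K i\<close>.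
  An inclusion adds the same simplex to both complexes (a new vertex is fresh, so it activates
  nothing old). For a contraction of \<open>r\<close> into \<open>w\<close>, let \<open>C\<close> be the cone from \<open>w\<close> over the active
  closed star of \<open>r\<close>. Since \<open>C\<close> lies in the active part, the collapse of \<open>hatK s i\<close> onto \<open>K i\<close>
  lifts to a collapse of \<open>hatK s i \<union> C\<close> onto \<open>K i \<union> C\<close>. In \<open>K i \<union> C\<close> the simplices through \<open>r\<close>
  pair off as \<open>\<rho>\<close> and \<open>insert w \<rho>\<close>; collapsing these pairs leaves exactly the contracted
  complex, which is the new active part once \<open>r\<close> is deactivated.
\<close>

definition face_closed :: "'v set set \<Rightarrow> bool" where
  "face_closed H \<longleftrightarrow> (\<forall>\<rho>\<in>H. \<forall>\<tau>. \<tau> \<subseteq> \<rho> \<and> \<tau> \<noteq> {} \<longrightarrow> \<tau> \<in> H)"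

definition active_subcomplex :: "'v set set \<Rightarrow> 'v set \<Rightarrow> 'v set set" where
  "active_subcomplex H A = {\<rho> \<in> H. \<rho> \<subseteq> A}"

lemma face_closedD: "face_closed H \<Longrightarrow> \<rho> \<in> H \<Longrightarrow> \<tau> \<subseteq> \<rho> \<Longrightarrow> \<tau> \<noteq> {} \<Longrightarrow> \<tau> \<in> H"
  unfolding face_closed_def by blast

lemma face_closed_active_subcomplex:
  "face_closed H \<Longrightarrow> face_closed (active_subcomplex H A)"
  unfolding face_closed_def active_subcomplex_def by blast

lemma vertex_active_subcomplex:
  assumes "face_closed H" "x \<in> vertices (active_subcomplex H A)"
  shows "x \<in> A" "{x} \<in> H"
  using assms unfolding face_closed_def active_subcomplex_def vertices_def by blast+

lemma elementary_collapse_subset: "elementary_collapse L L' \<Longrightarrow> L' \<subseteq> L"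
  unfolding elementary_collapse_def by auto

lemma collapses_subset: "collapses L K \<Longrightarrow> K \<subseteq> L"
  unfolding collapses_def
  by (induction rule: rtranclp_induct) (auto dest: elementary_collapse_subset)

lemma collapses_trans: "collapses L M \<Longrightarrow> collapses M K \<Longrightarrow> collapses L K"
  unfolding collapses_def by (rule rtranclp_trans)

lemma elementary_collapse_union:
  assumes "elementary_collapse L L'" and "\<forall>\<rho>\<in>C. \<forall>\<tau>\<in>L. \<tau> \<subseteq> \<rho> \<longrightarrow> \<tau> \<in> L'"
  shows "elementary_collapse (L \<union> C) (L' \<union> C)"
proof -
  obtain \<tau> \<sigma> where free: "free_face \<tau> L" and "\<sigma> \<in> L" "\<tau> \<subset> \<sigma>" and L': "L' = L - {\<tau>, \<sigma>}"
    using assms(1) unfolding elementary_collapse_def by blast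
  have "\<tau> \<in> L" using free unfolding free_face_def by blast
  then have "\<forall>\<rho>\<in>C. \<not> \<tau> \<subseteq> \<rho>" and "\<sigma> \<notin> C"
    using assms(2) \<open>\<sigma> \<in> L\<close> \<open>\<tau> \<subset> \<sigma>\<close> L' by blast+
  then have "free_face \<tau> (L \<union> C)" and "L' \<union> C = (L \<union> C) - {\<tau>, \<sigma>}"
    using free L' unfolding free_face_def by auto
  then show ?thesis
    unfolding elementary_collapse_def using \<open>\<sigma> \<in> L\<close> \<open>\<tau> \<subset> \<sigma>\<close> by blast
qed

lemma collapses_union:
  assumes "collapses L K" and "\<forall>\<rho>\<in>C. \<forall>\<tau>\<in>L. \<tau> \<subseteq> \<rho> \<longrightarrow> \<tau> \<in> K"
  shows "collapses (L \<union> C) (K \<union> C)"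
  using assms unfolding collapses_def
proof (induction rule: converse_rtranclp_induct)
  case base
  then show ?case by simp
next
  case (step L L')
  have "K \<subseteq> L'" and "L' \<subseteq> L"
    using step.hyps collapses_subset elementary_collapse_subset unfolding collapses_def by blast+
  then have "elementary_collapse (L \<union> C) (L' \<union> C)"
    using step.hyps(1) step.prems by (blast intro: elementary_collapse_union)
  with step.IH step.prems \<open>L' \<subseteq> L\<close> show ?case
    by (blast intro: converse_rtranclp_into_rtranclp)
qed

definition cone_paired :: "'v \<Rightarrow> 'v \<Rightarrow> 'v set set \<Rightarrow> bool" where
  "cone_paired r w M \<longleftrightarrow> (\<forall>\<rho>\<in>M. r \<in> \<rho> \<longrightarrow> insert w \<rho> \<in> M \<and> \<rho> - {w} \<in> M)"

lemma cone_paired_Diff: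
  assumes "cone_paired r w M" and "w \<notin> \<rho>"
  shows "cone_paired r w (M - {\<rho>, insert w \<rho>})"
  unfolding cone_paired_def
proof (intro ballI impI)
  fix \<sigma> assume \<sigma>: "\<sigma> \<in> M - {\<rho>, insert w \<rho>}" "r \<in> \<sigma>"
  have "\<sigma> - {w} \<noteq> \<rho>" using \<sigma>(1) by blast
  then have "insert w \<sigma> \<notin> {\<rho>, insert w \<rho>}" and "\<sigma> - {w} \<notin> {\<rho>, insert w \<rho>}"
    using \<open>w \<notin> \<rho>\<close> by (auto simp: insert_ident)
  with assms(1) \<sigma> show "insert w \<sigma> \<in> M - {\<rho>, insert w \<rho>} \<and> \<sigma> - {w} \<in> M - {\<rho>, insert w \<rho>}"
    unfolding cone_paired_def by blast
qed

lemma free_face_if_maximal: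
  assumes "cone_paired r w M" "r \<noteq> w" "\<rho> \<in> M" "r \<in> \<rho>" "w \<notin> \<rho>"
    and maximal: "\<And>\<sigma>. \<sigma> \<in> M \<Longrightarrow> r \<in> \<sigma> \<Longrightarrow> w \<notin> \<sigma> \<Longrightarrow> \<rho> \<subseteq> \<sigma> \<Longrightarrow> \<sigma> = \<rho>"
  shows "free_face \<rho> M"
proof -
  have "\<sigma> = insert w \<rho>" if "\<sigma> \<in> M" "\<rho> \<subset> \<sigma>" for \<sigma>
  proof -
    have "\<sigma> - {w} \<in> M" using assms(1,4) that unfolding cone_paired_def by blast
    then have "\<sigma> - {w} = \<rho>" using maximal assms(2,4,5) that(2) by blast
    then show ?thesis using that(2) by blast
  qed
  moreover have "insert w \<rho> \<in> M" using assms(1,3,4) unfolding cone_paired_def by blast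
  ultimately show ?thesis
    unfolding free_face_def using \<open>\<rho> \<in> M\<close> \<open>w \<notin> \<rho>\<close> by blast
qed

lemma collapses_cone_paired:
  assumes "finite M" "r \<noteq> w" "cone_paired r w M"
  shows "collapses M {\<rho>\<in>M. r \<notin> \<rho>}"
  using assms
proof (induction "card {\<rho>\<in>M. r \<in> \<rho>}" arbitrary: M rule: less_induct)
  case less
  define P where "P = {\<rho>\<in>M. r \<in> \<rho> \<and> w \<notin> \<rho>}"
  show ?case
  proof (cases "P = {}")
    case True
    then have "{\<rho>\<in>M. r \<notin> \<rho>} = M"
      using less.prems(2,3) unfolding P_def cone_paired_def by blast
    then show ?thesis unfolding collapses_def by simp
  next
    case False
    obtain \<rho> where "\<rho> \<in> P" and maximal: "\<And>\<sigma>. \<sigma> \<in> P \<Longrightarrow> \<rho> \<subseteq> \<sigma> \<Longrightarrow> \<rho> = \<sigma>"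
      using finite_has_maximal[OF _ False] less.prems(1) unfolding P_def by force
    then have \<rho>: "\<rho> \<in> M" "r \<in> \<rho>" "w \<notin> \<rho>" unfolding P_def by auto
    define M' where "M' = M - {\<rho>, insert w \<rho>}"
    have "free_face \<rho> M"
      using free_face_if_maximal[OF less.prems(3,2) \<rho>] maximal unfolding P_def by blast
    moreover have "insert w \<rho> \<in> M" using less.prems(3) \<rho> unfolding cone_paired_def by blast
    ultimately have "elementary_collapse M M'"
      unfolding elementary_collapse_def M'_def using \<rho>(3) by blast
    moreover have "collapses M' {\<sigma>\<in>M'. r \<notin> \<sigma>}"
    proof (rule less.hyps)
      show "card {\<sigma>\<in>M'. r \<in> \<sigma>} < card {\<sigma>\<in>M. r \<in> \<sigma>}"
        using less.prems(1) \<rho> unfolding M'_def by (intro psubset_card_mono) auto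
    qed (use less.prems cone_paired_Diff \<rho>(3) in \<open>auto simp: M'_def\<close>)
    moreover have "{\<sigma>\<in>M'. r \<notin> \<sigma>} = {\<sigma>\<in>M. r \<notin> \<sigma>}" using \<rho>(2) unfolding M'_def by blast
    ultimately show ?thesis
      unfolding collapses_def by (metis converse_rtranclp_into_rtranclp)
  qed
qed

lemma act_closed_star_iff:
  "\<tau> \<in> act_closed_star r H A \<longleftrightarrow> \<tau> \<in> active_subcomplex H A \<and> (\<exists>\<sigma>\<in>H. r \<in> \<sigma> \<and> \<tau> \<subseteq> \<sigma>)"
  unfolding act_closed_star_def closed_star_def active_subcomplex_def by blast

lemma act_closed_star_subset: "act_closed_star r H A \<subseteq> active_subcomplex H A"
  unfolding act_closed_star_def closed_star_def active_subcomplex_def by blast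

lemma face_closed_cone_step:
  assumes "face_closed H" "{w} \<in> H"
  shows "face_closed (cone_step H A r w)"
  unfolding face_closed_def
proof (intro ballI allI impI)
  fix \<rho> \<tau> assume \<rho>: "\<rho> \<in> cone_step H A r w" and \<tau>: "\<tau> \<subseteq> \<rho> \<and> \<tau> \<noteq> {}"
  show "\<tau> \<in> cone_step H A r w"
  proof (cases "\<rho> \<in> H")
    case True
    then have "\<tau> \<in> H" using face_closedD[OF assms(1)] \<tau> by blast
    then show ?thesis unfolding cone_step_def by blast
  next
    case False
    then obtain \<upsilon> where \<upsilon>: "\<upsilon> \<in> act_closed_star r H A" and "\<rho> = insert w \<upsilon>"
      using \<rho> unfolding cone_step_def by blast
    then have sub: "\<tau> - {w} \<subseteq> \<upsilon>" using \<tau> by blast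
    obtain \<sigma> where \<sigma>: "\<sigma> \<in> H" "r \<in> \<sigma>" "\<upsilon> \<subseteq> \<sigma>" and "\<upsilon> \<in> H" "\<upsilon> \<subseteq> A"
      using \<upsilon> unfolding act_closed_star_iff active_subcomplex_def by blast
    consider "\<tau> = {w}" | "w \<notin> \<tau>" | "w \<in> \<tau>" "\<tau> - {w} \<noteq> {}" using \<tau> by blast
    then show ?thesis
    proof cases
      case 1
      then show ?thesis using assms(2) unfolding cone_step_def by blast
    next
      case 2
      then have "\<tau> \<in> H" using face_closedD[OF assms(1) \<open>\<upsilon> \<in> H\<close>] sub \<tau> by simp
      then show ?thesis unfolding cone_step_def by blast
    next
      case 3
      then have "\<tau> - {w} \<in> H" using face_closedD[OF assms(1) \<open>\<upsilon> \<in> H\<close> sub] by blast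
      then have "\<tau> - {w} \<in> act_closed_star r H A"
        using sub \<sigma> \<open>\<upsilon> \<subseteq> A\<close> unfolding act_closed_star_iff active_subcomplex_def by blast
      then have "insert w (\<tau> - {w}) \<in> cone_step H A r w" unfolding cone_step_def by blast
      then show ?thesis using 3 by (simp add: insert_absorb)
    qed
  qed
qed

lemma active_subcomplex_cone_step:
  assumes "w \<in> A"
  shows "active_subcomplex (cone_step H A r w) (A - {r}) =
    {\<rho> \<in> active_subcomplex H A \<union> insert w ` act_closed_star r H A. r \<notin> \<rho>}"
  using assms unfolding cone_step_def active_subcomplex_def act_closed_star_def by auto

lemma image_rename_vertex:
  "(\<lambda>x. if x = r then w else x) ` \<rho> = (if r \<in> \<rho> then insert w (\<rho> - {r}) else \<rho>)"
  by (auto simp: image_iff)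

lemma contract_active_subcomplex:
  assumes "face_closed H" "r \<in> A" "w \<in> A" "{w} \<in> H" "r \<noteq> w"
  shows "contract (active_subcomplex H A) r w = active_subcomplex (cone_step H A r w) (A - {r})"
proof -
  define K where "K = active_subcomplex H A"
  have K_face: "\<tau> \<in> K" if "\<rho> \<in> K" "\<tau> \<subseteq> \<rho>" "\<tau> \<noteq> {}" for \<rho> \<tau>
    using face_closedD[OF face_closed_active_subcomplex[OF assms(1)]] that unfolding K_def by blast
  have "contract K r w = {\<rho> \<in> K \<union> insert w ` act_closed_star r H A. r \<notin> \<rho>}"
  proof (intro equalityI subsetI)
    fix x assume "x \<in> contract K r w"
    then obtain \<rho> where "\<rho> \<in> K" and x: "x = (if r \<in> \<rho> then insert w (\<rho> - {r}) else \<rho>)"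
      unfolding contract_def image_rename_vertex by blast
    consider "r \<notin> \<rho>" | "\<rho> = {r}" | "r \<in> \<rho>" "\<rho> - {r} \<noteq> {}" by blast
    then show "x \<in> {\<rho> \<in> K \<union> insert w ` act_closed_star r H A. r \<notin> \<rho>}"
    proof cases
      case 1
      then show ?thesis using \<open>\<rho> \<in> K\<close> x by simp
    next
      case 2
      then show ?thesis using x assms(3,4,5) unfolding K_def active_subcomplex_def by simp
    next
      case 3
      then have "\<rho> - {r} \<in> act_closed_star r H A"
        using K_face[OF \<open>\<rho> \<in> K\<close>, of "\<rho> - {r}"] \<open>\<rho> \<in> K\<close>
        unfolding act_closed_star_iff K_def active_subcomplex_def by blast
      then show ?thesis using 3 x assms(5) by auto
    qed
  next
    fix x assume x: "x \<in> {\<rho> \<in> K \<union> insert w ` act_closed_star r H A. r \<notin> \<rho>}"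
    show "x \<in> contract K r w"
    proof (cases "x \<in> K")
      case True
      then show ?thesis using x unfolding contract_def image_rename_vertex by force
    next
      case False
      then obtain \<tau> where \<tau>: "\<tau> \<in> act_closed_star r H A" "x = insert w \<tau>" "r \<notin> \<tau>"
        using x by blast
      then obtain \<sigma> where "\<sigma> \<in> H" "insert r \<tau> \<subseteq> \<sigma>" "\<tau> \<subseteq> A"
        unfolding act_closed_star_iff active_subcomplex_def by blast
      then have "insert r \<tau> \<in> K"
        using assms(1,2) unfolding K_def active_subcomplex_def face_closed_def by blast
      moreover have "x = (\<lambda>y. if y = r then w else y) ` insert r \<tau>"
        using \<tau> by (auto simp: image_rename_vertex)
      ultimately show ?thesis unfolding contract_def by blast
    qed
  qed
  then show ?thesis using active_subcomplex_cone_step[OF assms(3)] unfolding K_def by simp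
qed

lemma collapses_cone_step:
  assumes "collapses H (active_subcomplex H A)" "finite (active_subcomplex H A)"
    "face_closed H" "w \<in> A" "r \<noteq> w"
  shows "collapses (cone_step H A r w) (active_subcomplex (cone_step H A r w) (A - {r}))"
proof -
  define K where "K = active_subcomplex H A"
  define C where "C = insert w ` act_closed_star r H A"
  have C_active: "\<rho> \<subseteq> A" if "\<rho> \<in> C" for \<rho>
    using that assms(4) unfolding C_def act_closed_star_def by auto
  have "collapses (H \<union> C) (K \<union> C)"
    using assms(1) C_active by (intro collapses_union) (auto simp: K_def active_subcomplex_def)
  moreover have "collapses (K \<union> C) {\<rho> \<in> K \<union> C. r \<notin> \<rho>}"
  proof (rule collapses_cone_paired)
    show "finite (K \<union> C)"
      using assms(2) finite_subset[OF act_closed_star_subset assms(2)] unfolding K_def C_def by simp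
    show "cone_paired r w (K \<union> C)"
      unfolding cone_paired_def
    proof (intro ballI impI conjI)
      fix \<rho> assume \<rho>: "\<rho> \<in> K \<union> C" "r \<in> \<rho>"
      show "insert w \<rho> \<in> K \<union> C"
      proof (cases "w \<in> \<rho>")
        case True
        then show ?thesis using \<rho> by (simp add: insert_absorb)
      next
        case False
        then have "\<rho> \<in> K" using \<rho>(1) unfolding C_def by blast
        then have "\<rho> \<in> act_closed_star r H A"
          using \<rho>(2) unfolding K_def act_closed_star_iff active_subcomplex_def by blast
        then show ?thesis unfolding C_def by blast
      qed
      obtain \<upsilon> where "\<upsilon> \<in> K" "\<rho> - {w} \<subseteq> \<upsilon>"
        using \<rho>(1) act_closed_star_subset[of r H A] unfolding C_def K_def by auto
      moreover have "\<rho> - {w} \<noteq> {}" using \<rho>(2) assms(5) by blast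
      ultimately show "\<rho> - {w} \<in> K \<union> C"
        using face_closedD[OF face_closed_active_subcomplex[OF assms(3)]] unfolding K_def by blast
    qed
  qed (rule assms(5))
  ultimately have "collapses (H \<union> C) {\<rho> \<in> K \<union> C. r \<notin> \<rho>}"
    by (rule collapses_trans)
  then show ?thesis
    using active_subcomplex_cone_step[OF assms(4)] unfolding K_def C_def cone_step_def by simp
qed

definition coning_invariant :: "'v set set \<Rightarrow> 'v set set \<Rightarrow> 'v set \<Rightarrow> bool" where
  "coning_invariant K H A \<longleftrightarrow> K = active_subcomplex H A \<and> face_closed H \<and> collapses H K"

lemma coning_invariant_empty: "coning_invariant {} {} A"
  unfolding coning_invariant_def active_subcomplex_def face_closed_def collapses_def by simp

lemma coning_invariant_insert:
  assumes inv: "coning_invariant K H A" and sc: "simplicial_complex (insert \<sigma> K)"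
    and fresh: "card \<sigma> = 1 \<longrightarrow> \<sigma> \<inter> vertices H = {}"
  shows "coning_invariant (insert \<sigma> K) (insert \<sigma> H) (if card \<sigma> = 1 then A \<union> \<sigma> else A)"
proof -
  define A' where "A' = (if card \<sigma> = 1 then A \<union> \<sigma> else A)"
  have K: "K = active_subcomplex H A" and "face_closed H" "collapses H K"
    using inv unfolding coning_invariant_def by auto
  have face: "\<tau> \<in> insert \<sigma> K" if "\<tau> \<subseteq> \<sigma>" "\<tau> \<noteq> {}" for \<tau>
    using sc that unfolding simplicial_complex_def by blast
  have \<sigma>_active: "\<sigma> \<subseteq> A'"
  proof (cases "card \<sigma> = 1")
    case False
    have "{x} \<in> K" if "x \<in> \<sigma>" for x
      using face[of "{x}"] that False by (auto simp: card_1_singleton_iff)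
    then show ?thesis using False K unfolding A'_def active_subcomplex_def by auto
  qed (simp add: A'_def)
  have old_active: "\<tau> \<in> K" if "\<tau> \<in> H" "\<tau> \<subseteq> A'" for \<tau>
  proof -
    have "\<tau> \<subseteq> vertices H" using that(1) unfolding vertices_def by blast
    then have "\<tau> \<subseteq> A" using that(2) fresh unfolding A'_def by (auto split: if_splits)
    then show ?thesis using that(1) K unfolding active_subcomplex_def by blast
  qed
  have "A \<subseteq> A'" unfolding A'_def by auto
  then have "insert \<sigma> K = active_subcomplex (insert \<sigma> H) A'"
    using K \<sigma>_active old_active unfolding active_subcomplex_def by blast
  moreover have "face_closed (insert \<sigma> H)"
    using \<open>face_closed H\<close> face K unfolding face_closed_def active_subcomplex_def by blast
  moreover have "collapses (H \<union> {\<sigma>}) (K \<union> {\<sigma>})"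
    using \<open>collapses H K\<close> old_active \<sigma>_active by (intro collapses_union) auto
  ultimately show ?thesis unfolding coning_invariant_def A'_def by simp
qed

lemma coning_invariant_contract:
  assumes inv: "coning_invariant K H A" and "finite K" "r \<noteq> w"
    and "r \<in> vertices K" "w \<in> vertices K"
  shows "coning_invariant (contract K r w) (cone_step H A r w) (A - {r})"
proof -
  have K: "K = active_subcomplex H A" and "face_closed H" "collapses H K"
    using inv unfolding coning_invariant_def by auto
  have "r \<in> A" "w \<in> A" "{w} \<in> H"
    using vertex_active_subcomplex[OF \<open>face_closed H\<close>] assms(4,5) K by auto
  then have "contract K r w = active_subcomplex (cone_step H A r w) (A - {r})"
    using contract_active_subcomplex[OF \<open>face_closed H\<close> _ _ _ \<open>r \<noteq> w\<close>] K by simp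
  moreover have "face_closed (cone_step H A r w)"
    using face_closed_cone_step[OF \<open>face_closed H\<close> \<open>{w} \<in> H\<close>] .
  moreover have "collapses (cone_step H A r w) (active_subcomplex (cone_step H A r w) (A - {r}))"
    using collapses_cone_step[OF _ _ \<open>face_closed H\<close> \<open>w \<in> A\<close> \<open>r \<noteq> w\<close>]
      \<open>collapses H K\<close> \<open>finite K\<close> K by simp
  ultimately show ?thesis unfolding coning_invariant_def by simp
qed

lemma vertices_cone_step: "vertices (cone_step H A r w) \<subseteq> insert w (vertices H)"
  unfolding vertices_def cone_step_def act_closed_star_def closed_star_def by blast

lemma small_coning_Incl:
  assumes "s i = Incl \<sigma>"
  shows "hatK s (Suc i) = insert \<sigma> (hatK s i)"
    and "active s (Suc i) = (if card \<sigma> = 1 then active s i \<union> \<sigma> else active s i)"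
  using assms by (simp_all add: hatK_def active_def split: prod.split)

lemma small_coning_Contr:
  assumes "s i = Contr u v"
  defines "r \<equiv> coning_removed (hatK s i) (active s i) u v"
    and "w \<equiv> coning_survivor (hatK s i) (active s i) u v"
  shows "hatK s (Suc i) = cone_step (hatK s i) (active s i) r w"
    and "active s (Suc i) = active s i - {r}"
  using assms by (simp_all add: hatK_def active_def split: prod.split)

lemma coning_tower_invariant:
  assumes tower: "coning_tower K s m"
  shows "i \<le> m \<Longrightarrow> coning_invariant (K i) (hatK s i) (active s i) \<and>
    vertices (hatK s i) \<subseteq> (\<Union>j\<le>i. vertices (K j))"
proof (induction i)
  case 0
  have "K 0 = {}" "hatK s 0 = {}" using tower unfolding coning_tower_def hatK_def by auto
  then show ?case using coning_invariant_empty unfolding vertices_def by simp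
next
  case (Suc i)
  then have inv: "coning_invariant (K i) (hatK s i) (active s i)"
    and vert: "vertices (hatK s i) \<subseteq> (\<Union>j\<le>i. vertices (K j))" by auto
  have sc: "simplicial_complex (K i)" "simplicial_complex (K (Suc i))"
    using tower Suc.prems unfolding coning_tower_def by auto
  from Suc.prems have "i < m" by simp
  note step = tower[unfolded coning_tower_def, THEN conjunct2, THEN conjunct2, rule_format, OF \<open>i < m\<close>]
  show ?case
  proof (cases "s i")
    case (Incl \<sigma>)
    with step have K: "K (Suc i) = insert \<sigma> (K i)"
      and "card \<sigma> = 1 \<longrightarrow> \<sigma> \<inter> vertices (hatK s i) = {}"
      using vert by auto
    then have "coning_invariant (K (Suc i)) (hatK s (Suc i)) (active s (Suc i))"
      using coning_invariant_insert[OF inv] sc(2) small_coning_Incl[of s i \<sigma>, OF Incl] by simp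
    moreover have "\<sigma> \<subseteq> vertices (K (Suc i))" using K unfolding vertices_def by blast
    ultimately show ?thesis
      using vert small_coning_Incl[of s i \<sigma>, OF Incl] unfolding vertices_def by (auto simp: atMost_Suc)
  next
    case (Contr u v)
    define r where "r = coning_removed (hatK s i) (active s i) u v"
    define w where "w = coning_survivor (hatK s i) (active s i) u v"
    from step Contr have "u \<noteq> v" "u \<in> vertices (K i)" "v \<in> vertices (K i)"
      and K: "K (Suc i) = contract (K i) r w"
      unfolding r_def w_def by auto
    then have "r \<noteq> w" "r \<in> vertices (K i)" "w \<in> vertices (K i)"
      unfolding r_def w_def coning_removed_def coning_survivor_def by auto
    then have "coning_invariant (K (Suc i)) (hatK s (Suc i)) (active s (Suc i))"
      using coning_invariant_contract[OF inv] sc(1) K small_coning_Contr[of s i u v, OF Contr]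
      unfolding simplicial_complex_def r_def w_def by simp
    moreover have "vertices (hatK s (Suc i)) \<subseteq> (\<Union>j\<le>Suc i. vertices (K j))"
      using vertices_cone_step vert \<open>w \<in> vertices (K i)\<close> small_coning_Contr[of s i u v, OF Contr]
      unfolding r_def w_def by fastforce
    ultimately show ?thesis by blast
  qed
qed

theorem lemma5:
  fixes K :: "nat \<Rightarrow> 'v set set" and s :: "nat \<Rightarrow> 'v step" and m :: nat
  assumes "coning_tower K s m"
  shows "\<forall>i\<le>m. K i \<subseteq> hatK s i \<and> collapses (hatK s i) (K i)"
  using coning_tower_invariant[OF assms]
  unfolding coning_invariant_def active_subcomplex_def by blast

end
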